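(* Let $A$ be a finite totally ordered alphabet and let $u\in A^{+}$ be a primitive word. Then the semigroups $S_{u}$ and $S(u)$ (defined in the context) are isomorphic; indeed the map $[x]\mapsto x'$ $(x\in A^{+})$ is a well-defined isomorphism $S_{u}\to S(u)$.
   Context: A word is primitive if it is not a power $r^{t}$ ($t\ge 2$) of another word. Words $w=xy$ and $yx$ are conjugates; the necklace $n(u)$ of a primitive word $u$ is its set of conjugates. For each letter $a\in A$ let $a'$ be the partial one-to-one map on $n(u)$ whose domain is the set of words of $n(u)$ beginning with $a$, given by $ax\mapsto xa$ (so $a'$ is the empty map if $a$ does not occur in $u$). For $x=b_{1}\cdots b_{m}\in A^{+}$ put $x'=b_{1}'b_{2}'\cdots b_{m}'$ (composition of partial maps, from left to right). $S(u)$ is the semigroup of partial maps on $n(u)$ generated by $\{a' : a\in A\}$ under composition. Let $\langle u\rangle=\{u^{m}:m\ge 1\}$ and let $\rho_{u}$ be the syntactic congruence of $\langle u\rangle$ on $A^{+}$: for $x,y\in A^{+}$, $x\,\rho_{u}\,y$ iff for all $p,q\in A^{*}$, $pxq\in\langle u\rangle\Leftrightarrow pyq\in\langle u\rangle$. $S_{u}=A^{+}/\rho_{u}$, and $[x]$ denotes the $\rho_u$-class of $x$. *)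

theory Defs
  imports Main
begin

definition Aplus :: "'a set \<Rightarrow> 'a list set" where
  "Aplus A = {w. w \<in> lists A \<and> w \<noteq> []}"

definition primitive :: "'a list \<Rightarrow> bool" where
  "primitive u \<longleftrightarrow> \<not> (\<exists>r t. t \<ge> 2 \<and> u = concat (replicate t r))"

definition necklace :: "'a list \<Rightarrow> 'a list set" where
  "necklace u = {y @ x | x y. u = x @ y}"

definition letter_map :: "'a list \<Rightarrow> 'a \<Rightarrow> ('a list \<Rightarrow> 'a list option)" where
  "letter_map u a = (\<lambda>w. if w \<in> necklace u \<and> w \<noteq> [] \<and> hd w = a
                         then Some (tl w @ [a]) else None)"

text \<open>x' = b1' b2' ... bm', composition left to right: first apply b1', then b2', ...
  In map_comp notation (g o_m f) means apply f first, then g.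
  (The value on the empty word is irrelevant; only nonempty words are used.)\<close>
fun word_map :: "'a list \<Rightarrow> 'a list \<Rightarrow> ('a list \<Rightarrow> 'a list option)" where
  "word_map u [] = Some"
| "word_map u [b] = letter_map u b"
| "word_map u (b # c # bs) = word_map u (c # bs) \<circ>\<^sub>m letter_map u b"

inductive_set Su_maps :: "'a set \<Rightarrow> 'a list \<Rightarrow> ('a list \<Rightarrow> 'a list option) set"
  for A :: "'a set" and u :: "'a list" where
  gen: "a \<in> A \<Longrightarrow> letter_map u a \<in> Su_maps A u"
| comp: "f \<in> Su_maps A u \<Longrightarrow> g \<in> Su_maps A u \<Longrightarrow> (g \<circ>\<^sub>m f) \<in> Su_maps A u"

definition powers :: "'a list \<Rightarrow> 'a list set" where
  "powers u = {concat (replicate m u) | m. m \<ge> 1}"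

definition synt_cong :: "'a set \<Rightarrow> 'a list \<Rightarrow> ('a list \<times> 'a list) set" where
  "synt_cong A u = {(x, y). x \<in> Aplus A \<and> y \<in> Aplus A \<and>
     (\<forall>p q. p \<in> lists A \<longrightarrow> q \<in> lists A \<longrightarrow>
        (p @ x @ q \<in> powers u \<longleftrightarrow> p @ y @ q \<in> powers u))}"

end

theory Submission
  imports Defs "HOL-Number_Theory.Cong"
begin

text \<open>The conjugates of u are its rotations, and for nonempty x the partial map x'
  sends rotate k u to rotate (k + |x|) u exactly when x occurs at position k of the
  periodic word u u u \<dots>, and is undefined otherwise. Similarly p x q \<in> \<langle>u\<rangle> iff p, x, q
  occur consecutively from position 0 of u u u \<dots> and |u| divides |p x q|. A rotation
  fixing u by a non-multiple of |u| would make u a proper power, so for primitive u the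
  rotation rotate k u determines k mod |u|. Hence x' records exactly which contexts
  complete x to a power of u: \<rho>_u is the kernel of the morphism x \<mapsto> x' from A^+ onto S(u).\<close>

lemma dvd_add_iff_mod_eq:
  fixes a b c n :: nat
  assumes "n dvd a + c"
  shows "n dvd b + c \<longleftrightarrow> b mod n = a mod n"
proof -
  have "n dvd b + c \<longleftrightarrow> [b + c = a + c] (mod n)"
    using assms by (simp add: cong_def dvd_eq_mod_eq_0)
  then show ?thesis by (metis cong_add_rcancel_nat cong_def)
qed

lemma all_less_add_iff: "(\<forall>j<m + (n::nat). P j) \<longleftrightarrow> (\<forall>j<m. P j) \<and> (\<forall>j<n. P (m + j))"
proof (intro iffI conjI allI impI)
  fix j assume "(\<forall>j<m. P j) \<and> (\<forall>j<n. P (m + j))" and "j < m + n"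
  then show "P j" by (cases "j < m") (auto dest: spec[of _ "j - m"])
qed auto

definition occurs_at :: "'a list \<Rightarrow> nat \<Rightarrow> 'a list \<Rightarrow> bool" where
  "occurs_at u i x \<longleftrightarrow> (\<forall>j<length x. x ! j = u ! ((i + j) mod length u))"

lemma occurs_at_append:
  "occurs_at u i (x @ y) \<longleftrightarrow> occurs_at u i x \<and> occurs_at u (i + length x) y"
  unfolding occurs_at_def length_append all_less_add_iff by (simp add: nth_append add.assoc)

lemma occurs_at_Nil [simp]: "occurs_at u i []"
  by (simp add: occurs_at_def)

lemma occurs_at_Cons:
  "occurs_at u i (b # x) \<longleftrightarrow> b = u ! (i mod length u) \<and> occurs_at u (Suc i) x"
  using occurs_at_append[of u i "[b]" x] by (simp add: occurs_at_def)

lemma occurs_at_mod_cong: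
  "i mod length u = i' mod length u \<Longrightarrow> occurs_at u i x \<longleftrightarrow> occurs_at u i' x"
  unfolding occurs_at_def by (metis mod_add_left_eq)

definition cyclic_factor :: "'a list \<Rightarrow> nat \<Rightarrow> nat \<Rightarrow> 'a list" where
  "cyclic_factor u i l = map (\<lambda>j. u ! ((i + j) mod length u)) [0..<l]"

lemma length_cyclic_factor [simp]: "length (cyclic_factor u i l) = l"
  by (simp add: cyclic_factor_def)

lemma occurs_at_cyclic_factor [simp]: "occurs_at u i (cyclic_factor u i l)"
  by (simp add: occurs_at_def cyclic_factor_def)

lemma set_cyclic_factor: "u \<noteq> [] \<Longrightarrow> set (cyclic_factor u i l) \<subseteq> set u"
  by (auto simp: cyclic_factor_def)

lemma length_concat_replicate: "length (concat (replicate m r)) = m * length r"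
  by (induction m) auto

lemma nth_concat_replicate:
  "j < m * length r \<Longrightarrow> concat (replicate m r) ! j = r ! (j mod length r)"
proof (induction m arbitrary: j)
  case (Suc m)
  then show ?case
    by (cases "j < length r") (auto simp: nth_append le_mod_geq)
qed simp

lemma mem_powers_iff:
  assumes "u \<noteq> []"
  shows "z \<in> powers u \<longleftrightarrow> z \<noteq> [] \<and> length u dvd length z \<and> occurs_at u 0 z"
proof
  assume "z \<in> powers u"
  then obtain m where "m \<ge> 1" "z = concat (replicate m u)" unfolding powers_def by auto
  then show "z \<noteq> [] \<and> length u dvd length z \<and> occurs_at u 0 z"
    using assms by (auto simp: length_concat_replicate occurs_at_def nth_concat_replicate)
next
  assume z: "z \<noteq> [] \<and> length u dvd length z \<and> occurs_at u 0 z"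
  then obtain m where m: "length z = m * length u" by (metis dvdE mult.commute)
  with z have "m \<ge> 1" by (cases m) auto
  moreover have "z = concat (replicate m u)"
    using z m by (intro nth_equalityI)
      (auto simp: length_concat_replicate occurs_at_def nth_concat_replicate)
  ultimately show "z \<in> powers u" unfolding powers_def by auto
qed

lemma append3_mem_powers_iff:
  assumes "u \<noteq> []" "x \<noteq> []"
  shows "p @ x @ q \<in> powers u \<longleftrightarrow> length u dvd length p + length x + length q
     \<and> occurs_at u 0 p \<and> occurs_at u (length p) x \<and> occurs_at u (length p + length x) q"
  using assms by (simp add: mem_powers_iff occurs_at_append add.assoc)

lemma necklace_eq_range_rotate: "necklace u = range (\<lambda>k. rotate k u)"
proof (intro equalityI subsetI)
  fix w assume "w \<in> necklace u"
  then obtain x y where "u = x @ y" "w = y @ x" unfolding necklace_def by blast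
  then show "w \<in> range (\<lambda>k. rotate k u)" by (metis rangeI rotate_append)
next
  fix w assume "w \<in> range (\<lambda>k. rotate k u)"
  then obtain k where "w = rotate k u" by blast
  then have "u = take (k mod length u) u @ drop (k mod length u) u"
    and "w = drop (k mod length u) u @ take (k mod length u) u"
    by (simp_all add: rotate_drop_take)
  then show "w \<in> necklace u" unfolding necklace_def by blast
qed

lemma primitive_nonempty: "primitive u \<Longrightarrow> u \<noteq> []"
  unfolding primitive_def by (metis concat_replicate_trivial le_refl numeral_le_iff one_le_numeral)

lemma primitive_rotate_eq_self:
  assumes prim: "primitive u" and rot: "rotate d u = u"
  shows "length u dvd d"
proof (rule ccontr)
  let ?xs = "take (d mod length u) u" and ?ys = "drop (d mod length u) u"
  assume "\<not> length u dvd d"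
  then have "?xs \<noteq> []" "?ys \<noteq> []"
    using primitive_nonempty[OF prim] by (simp_all add: dvd_eq_mod_eq_0 not_le)
  moreover have "?xs @ ?ys = ?ys @ ?xs"
    using rot rotate_drop_take[of d u] by simp
  ultimately obtain t r where "t > 1" "concat (replicate t r) = u"
    using comm_append_is_replicate by (metis append_take_drop_id)
  with prim show False unfolding primitive_def by (metis Suc_leI one_add_one plus_1_eq_Suc)
qed

lemma primitive_rotate_eq_iff:
  assumes prim: "primitive u"
  shows "rotate a u = rotate b u \<longleftrightarrow> a mod length u = b mod length u"
proof
  let ?n = "length u"
  have nb: "b + (?n - 1) * b = ?n * b"
    using primitive_nonempty[OF prim] by (cases ?n) auto
  assume "rotate a u = rotate b u"
  then have "rotate ((?n - 1) * b) (rotate a u) = rotate ((?n - 1) * b) (rotate b u)"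
    by simp
  then have "rotate (a + (?n - 1) * b) u = rotate (b + (?n - 1) * b) u"
    by (simp add: rotate_rotate add.commute)
  then have "rotate (a + (?n - 1) * b) u = u"
    unfolding nb by simp
  then have "?n dvd a + (?n - 1) * b"
    by (rule primitive_rotate_eq_self[OF prim])
  moreover have "?n dvd b + (?n - 1) * b" unfolding nb by simp
  ultimately show "a mod ?n = b mod ?n" by (simp add: dvd_add_iff_mod_eq)
next
  show "a mod length u = b mod length u \<Longrightarrow> rotate a u = rotate b u"
    using rotate_conv_mod[of a u] rotate_conv_mod[of b u] by simp
qed

lemma letter_map_rotate:
  assumes "u \<noteq> []"
  shows "letter_map u b (rotate k u) =
    (if b = u ! (k mod length u) then Some (rotate (Suc k) u) else None)"
proof -
  have "rotate k u \<in> necklace u" by (simp add: necklace_eq_range_rotate)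
  moreover have "hd (rotate k u) = u ! (k mod length u)"
    using assms by (rule hd_rotate_conv_nth)
  moreover have "tl (rotate k u) @ [hd (rotate k u)] = rotate (Suc k) u"
    using assms by (simp add: rotate1_hd_tl)
  ultimately show ?thesis using assms unfolding letter_map_def by auto
qed

lemma word_map_rotate:
  "u \<noteq> [] \<Longrightarrow> x \<noteq> [] \<Longrightarrow> word_map u x (rotate k u) =
    (if occurs_at u k x then Some (rotate (k + length x) u) else None)"
proof (induction u x arbitrary: k rule: word_map.induct)
  case (2 u b)
  then show ?case by (simp add: letter_map_rotate occurs_at_Cons)
next
  case (3 u b c bs)
  show ?case
  proof (cases "b = u ! (k mod length u)")
    case True
    then have "occurs_at u k (b # c # bs) \<longleftrightarrow> occurs_at u (Suc k) (c # bs)"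
      using occurs_at_Cons[of u k b "c # bs"] by blast
    then show ?thesis using True "3.IH"[of "Suc k"] "3.prems"
      by (simp add: letter_map_rotate del: rotate_Suc)
  next
    case False
    then show ?thesis using "3.prems" by (simp add: letter_map_rotate occurs_at_Cons)
  qed
qed simp

lemma word_map_outside_necklace: "x \<noteq> [] \<Longrightarrow> w \<notin> necklace u \<Longrightarrow> word_map u x w = None"
  by (induction u x rule: word_map.induct) (simp_all add: letter_map_def)

lemma map_comp_assoc: "(h \<circ>\<^sub>m g) \<circ>\<^sub>m f = h \<circ>\<^sub>m (g \<circ>\<^sub>m f)"
  by (rule ext) (simp add: map_comp_def split: option.split)

lemma word_map_append:
  "x \<noteq> [] \<Longrightarrow> y \<noteq> [] \<Longrightarrow> word_map u (x @ y) = word_map u y \<circ>\<^sub>m word_map u x"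
proof (induction u x rule: word_map.induct)
  case (2 u b)
  then show ?case by (cases y) auto
next
  case (3 u b c bs)
  then show ?case by (simp add: map_comp_assoc)
qed simp

lemma Su_maps_eq_image_word_map: "Su_maps A u = word_map u ` Aplus A"
proof (intro equalityI subsetI)
  fix f assume "f \<in> Su_maps A u"
  then show "f \<in> word_map u ` Aplus A"
  proof (induction rule: Su_maps.induct)
    case (gen a)
    then have "[a] \<in> Aplus A" by (simp add: Aplus_def)
    then show ?case by (metis image_eqI word_map.simps(2))
  next
    case (comp f g)
    then obtain x y where "x \<in> Aplus A" "y \<in> Aplus A" "f = word_map u x" "g = word_map u y"
      by blast
    then have "x @ y \<in> Aplus A" "g \<circ>\<^sub>m f = word_map u (x @ y)"
      by (auto simp: Aplus_def word_map_append)
    then show ?case by blast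
  qed
next
  have "x \<in> lists A \<Longrightarrow> x \<noteq> [] \<Longrightarrow> word_map u x \<in> Su_maps A u" for x
    by (induction u x rule: word_map.induct) (auto intro: Su_maps.intros)
  then show "f \<in> Su_maps A u" if "f \<in> word_map u ` Aplus A" for f
    using that by (auto simp: Aplus_def)
qed

lemma word_map_eq_imp_powers_context:
  assumes prim: "primitive u" and x: "x \<noteq> []" and y: "y \<noteq> []"
    and eq: "word_map u x = word_map u y" and pxq: "p @ x @ q \<in> powers u"
  shows "p @ y @ q \<in> powers u"
proof -
  let ?k = "length p" and ?n = "length u"
  have u: "u \<noteq> []" using prim by (rule primitive_nonempty)
  have dvd_x: "?n dvd ?k + length x + length q" and p: "occurs_at u 0 p"
    and "occurs_at u ?k x" and q: "occurs_at u (?k + length x) q"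
    using pxq append3_mem_powers_iff[OF u x] by auto
  then have "word_map u x (rotate ?k u) = Some (rotate (?k + length x) u)"
    by (simp add: word_map_rotate[OF u x])
  then have "word_map u y (rotate ?k u) = Some (rotate (?k + length x) u)"
    using eq by simp
  then have y_occ: "occurs_at u ?k y" and "rotate (?k + length y) u = rotate (?k + length x) u"
    using word_map_rotate[OF u y, of ?k] by (auto split: if_splits)
  then have m: "(?k + length y) mod ?n = (?k + length x) mod ?n"
    using primitive_rotate_eq_iff[OF prim] by blast
  have "?n dvd ?k + length y + length q"
    using dvd_add_iff_mod_eq[OF dvd_x] m by simp
  moreover have "occurs_at u (?k + length y) q"
    using q occurs_at_mod_cong[OF m] by simp
  ultimately show ?thesis
    using append3_mem_powers_iff[OF u y] p y_occ by simp
qed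

lemma powers_context_imp_word_map_Some:
  assumes u: "u \<noteq> []" "set u \<subseteq> A" and x: "x \<noteq> []" and y: "y \<noteq> []"
    and ctx: "\<And>p q. p \<in> lists A \<Longrightarrow> q \<in> lists A \<Longrightarrow>
      p @ x @ q \<in> powers u \<Longrightarrow> p @ y @ q \<in> powers u"
    and wx: "word_map u x w = Some w'"
  shows "word_map u y w = Some w'"
proof -
  let ?n = "length u"
  have "w \<in> necklace u" using wx word_map_outside_necklace[OF x] by fastforce
  then obtain k where w: "w = rotate k u" by (auto simp: necklace_eq_range_rotate)
  have x_occ: "occurs_at u k x" and w': "w' = rotate (k + length x) u"
    using wx word_map_rotate[OF u(1) x, of k] w by (auto split: if_splits)
  define s where "s = k + length x"
  define p where "p = cyclic_factor u 0 k"
  \<comment> \<open>chosen so that p x q has length |u| * s\<close>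
  define q where "q = cyclic_factor u s ((?n - 1) * s)"
  have "length p + length x + length q = ?n * s"
    using u(1) by (cases ?n) (simp_all add: p_def q_def s_def)
  then have dvd_x: "?n dvd length p + length x + length q" by simp
  have "p \<in> lists A" "q \<in> lists A"
    using set_cyclic_factor[OF u(1)] u(2) by (auto simp: p_def q_def)
  moreover have "p @ x @ q \<in> powers u"
    using append3_mem_powers_iff[OF u(1) x] dvd_x x_occ by (simp add: p_def q_def s_def)
  ultimately have "p @ y @ q \<in> powers u" by (rule ctx)
  then have y_occ: "occurs_at u k y" and "?n dvd k + length y + length q"
    using append3_mem_powers_iff[OF u(1) y] by (auto simp: p_def)
  then have "(k + length y) mod ?n = (k + length x) mod ?n"
    using dvd_add_iff_mod_eq[OF dvd_x] by (simp add: p_def)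
  then show ?thesis
    using word_map_rotate[OF u(1) y, of k] y_occ w w' rotate_conv_mod by metis
qed

lemma synt_cong_eq_word_map_kernel:
  assumes u: "u \<in> Aplus A" and prim: "primitive u"
  shows "synt_cong A u = {(x, y). x \<in> Aplus A \<and> y \<in> Aplus A \<and> word_map u x = word_map u y}"
proof -
  have u_ne: "u \<noteq> []" and u_A: "set u \<subseteq> A" using u by (auto simp: Aplus_def)
  have "(x, y) \<in> synt_cong A u \<longleftrightarrow> word_map u x = word_map u y"
    if x: "x \<in> Aplus A" and y: "y \<in> Aplus A" for x y
  proof -
    have x_ne: "x \<noteq> []" and y_ne: "y \<noteq> []" using x y by (auto simp: Aplus_def)
    show ?thesis
    proof
      assume "(x, y) \<in> synt_cong A u"
      then have xy: "p @ x @ q \<in> powers u \<Longrightarrow> p @ y @ q \<in> powers u"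
        and yx: "p @ y @ q \<in> powers u \<Longrightarrow> p @ x @ q \<in> powers u"
        if "p \<in> lists A" "q \<in> lists A" for p q
        using that unfolding synt_cong_def by auto
      have "word_map u x w = word_map u y w" for w
      proof (cases "word_map u x w")
        case None
        then show ?thesis
          using powers_context_imp_word_map_Some[OF u_ne u_A y_ne x_ne yx]
          by (cases "word_map u y w") auto
      next
        case (Some w')
        then show ?thesis
          using powers_context_imp_word_map_Some[OF u_ne u_A x_ne y_ne xy] by simp
      qed
      then show "word_map u x = word_map u y" ..
    next
      assume "word_map u x = word_map u y"
      then show "(x, y) \<in> synt_cong A u"
        using x y word_map_eq_imp_powers_context[OF prim x_ne y_ne]
          word_map_eq_imp_powers_context[OF prim y_ne x_ne]
        unfolding synt_cong_def by auto
    qed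
  qed
  moreover have "synt_cong A u \<subseteq> Aplus A \<times> Aplus A" unfolding synt_cong_def by auto
  ultimately show ?thesis by auto
qed

lemma kernel_on_Image_singleton:
  assumes R: "R = {(x, y). x \<in> S \<and> y \<in> S \<and> f x = f y}" and x: "x \<in> S"
  shows "R `` {x} = {y \<in> S. f y = f x}"
  using x by (auto simp: R)

lemma the_elem_image_kernel_class:
  assumes R: "R = {(x, y). x \<in> S \<and> y \<in> S \<and> f x = f y}" and x: "x \<in> S"
  shows "the_elem (f ` R `` {x}) = f x"
  unfolding kernel_on_Image_singleton[OF assms] by (rule the_elem_image_unique) (use x in auto)

lemma bij_betw_quotient_kernel_image:
  assumes R: "R = {(x, y). x \<in> S \<and> y \<in> S \<and> f x = f y}"
  shows "bij_betw (\<lambda>C. the_elem (f ` C)) (S // R) (f ` S)"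
proof (rule bij_betw_imageI)
  show "inj_on (\<lambda>C. the_elem (f ` C)) (S // R)"
  proof (rule inj_onI)
    fix C D assume "C \<in> S // R" "D \<in> S // R" and eq: "the_elem (f ` C) = the_elem (f ` D)"
    then obtain x y where x: "x \<in> S" "C = R `` {x}" and y: "y \<in> S" "D = R `` {y}"
      by (auto elim!: quotientE)
    with eq have "f x = f y" by (simp add: the_elem_image_kernel_class[OF R])
    with x y show "C = D" by (simp add: kernel_on_Image_singleton[OF R])
  qed
  have "(\<lambda>C. the_elem (f ` C)) ` (S // R) = (\<lambda>x. the_elem (f ` R `` {x})) ` S"
    by (auto simp: quotient_def)
  also have "\<dots> = f ` S"
    by (rule image_cong) (simp_all add: the_elem_image_kernel_class[OF R])
  finally show "(\<lambda>C. the_elem (f ` C)) ` (S // R) = f ` S" .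
qed

theorem theorem2p5:
  fixes A :: "('a::linorder) set" and u :: "'a list"
  assumes "finite A" and "u \<in> Aplus A" and "primitive u"
  shows "\<exists>\<phi>. (\<forall>x \<in> Aplus A. \<phi> (synt_cong A u `` {x}) = word_map u x)
            \<and> bij_betw \<phi> (Aplus A // synt_cong A u) (Su_maps A u)
            \<and> (\<forall>x \<in> Aplus A. \<forall>y \<in> Aplus A.
                 \<phi> (synt_cong A u `` {x @ y}) = \<phi> (synt_cong A u `` {y}) \<circ>\<^sub>m \<phi> (synt_cong A u `` {x}))"
proof -
  let ?R = "synt_cong A u" and ?\<phi> = "\<lambda>C. the_elem (word_map u ` C)"
  have R: "?R = {(x, y). x \<in> Aplus A \<and> y \<in> Aplus A \<and> word_map u x = word_map u y}"
    using assms(2,3) by (rule synt_cong_eq_word_map_kernel)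
  note word_map_class = the_elem_image_kernel_class[OF R]
  show ?thesis
  proof (intro exI[of _ ?\<phi>] conjI ballI)
    show "?\<phi> (?R `` {x}) = word_map u x" if "x \<in> Aplus A" for x
      using that by (rule word_map_class)
    show "bij_betw ?\<phi> (Aplus A // ?R) (Su_maps A u)"
      using bij_betw_quotient_kernel_image[OF R] by (simp add: Su_maps_eq_image_word_map)
    fix x y assume x: "x \<in> Aplus A" and y: "y \<in> Aplus A"
    then have "x @ y \<in> Aplus A" and "x \<noteq> []" and "y \<noteq> []" by (auto simp: Aplus_def)
    with x y show "?\<phi> (?R `` {x @ y}) = ?\<phi> (?R `` {y}) \<circ>\<^sub>m ?\<phi> (?R `` {x})"
      by (simp add: word_map_class word_map_append)
  qed
qed

end
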